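(* Let $\gamma=yxyy^*\in\mathcal{V}^1Q$, $\Pi_0=[xx^*,x^*]+[yx^*,y^*]$ and $\Pi_\infty=[yy^*,yxx^*+y^2y^*]$ in $\mathcal{V}^2Q$. Then $[\gamma,\Pi_0]_{\mathcal V}=\Pi_\infty$ and $[\gamma,\Pi_\infty]_{\mathcal V}=0$.
   Context: $Q$ is the quiver with one vertex and two loops $x,y$, so $\mathbb{C}Q=\mathbb{C}\langle x,y\rangle$ and $\mathbb{C}\bar Q=\mathbb{C}\langle x,y,x^*,y^*\rangle$, graded by the number of starred letters. $\mathcal{V}Q$ is the quotient of $\mathbb{C}\bar Q$ by the span of $PR-(-1)^{pr}RP$ for $P,R$ homogeneous of degrees $p,r$; $[u,v]=uv-vu$. For $w\in\{x,y,x^*,y^*\}$, $D_w(x_1\cdots x_n)=\sum_{i:x_i=w}(-1)^{\lambda_i\mu_i}x_{i+1}\cdots x_nx_1\cdots x_{i-1}$, $\lambda_i$ (resp. $\mu_i$) the number of starred letters among $x_{i+1},\dots,x_n$ (resp. $x_1,\dots,x_i$). For $\gamma\in\mathcal{V}^rQ,\delta\in\mathcal{V}^sQ$: $[\gamma,\delta]_{\mathcal V}=\sum_{a\in\{x,y\}}\big(D_{a^*}(\gamma)D_a(\delta)-(-1)^{(r-1)(s-1)}D_{a^*}(\delta)D_a(\gamma)\big)$ modulo the relations. *)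

theory Defs
  imports Complex_Main
begin

datatype letter = X | Y | Xs | Ys

type_synonym word = "letter list"

text \<open>Elements of C<x,y,x*,y*> given as formal finite linear combinations of words.\<close>
type_synonym poly = "(complex \<times> word) list"

fun starred :: "letter \<Rightarrow> bool" where
  "starred X = False" | "starred Y = False" | "starred Xs = True" | "starred Ys = True"

fun star :: "letter \<Rightarrow> letter" where
  "star X = Xs" | "star Y = Ys" | "star Xs = X" | "star Ys = Y"

definition nst :: "word \<Rightarrow> nat" where
  "nst w = length (filter starred w)"

definition ev :: "poly \<Rightarrow> word \<Rightarrow> complex" where
  "ev p v = sum_list (map (\<lambda>(c,u). if u = v then c else 0) p)"

definition mon :: "word \<Rightarrow> word \<Rightarrow> complex" where
  "mon w v = (if v = w then 1 else 0)"

definition pmul :: "poly \<Rightarrow> poly \<Rightarrow> poly" where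
  "pmul p q = concat (map (\<lambda>(a,u). map (\<lambda>(b,v). (a*b, u @ v)) q) p)"

definition psmul :: "complex \<Rightarrow> poly \<Rightarrow> poly" where
  "psmul c p = map (\<lambda>(a,u). (c*a, u)) p"

definition comm :: "poly \<Rightarrow> poly \<Rightarrow> poly" where
  "comm p q = pmul p q @ psmul (-1) (pmul q p)"

text \<open>D_w on a single word x_1...x_n (0-based index i corresponds to x_{i+1}):
  sum over positions with x_i = w of (-1)^(lambda_i mu_i) x_{i+1}...x_n x_1...x_{i-1}.\<close>
definition Dw :: "letter \<Rightarrow> word \<Rightarrow> poly" where
  "Dw w u = map (\<lambda>i. ((-1) ^ (nst (drop (Suc i) u) * nst (take (Suc i) u)),
                       drop (Suc i) u @ take i u))
              (filter (\<lambda>i. u ! i = w) [0..<length u])"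

definition Dp :: "letter \<Rightarrow> poly \<Rightarrow> poly" where
  "Dp w p = concat (map (\<lambda>(c,u). psmul c (Dw w u)) p)"

text \<open>The subspace spanned by P R - (-1)^(pr) R P; by bilinearity it suffices to take
  words P, R.\<close>
inductive_set relspan :: "(word \<Rightarrow> complex) set" where
  zero: "(\<lambda>_. 0) \<in> relspan"
| step: "f \<in> relspan \<Longrightarrow>
     (\<lambda>v. f v + c * (mon (u @ w) v - (-1) ^ (nst u * nst w) * mon (w @ u) v)) \<in> relspan"

text \<open>Equality in VQ = C\bar Q / relations.\<close>
definition veq :: "poly \<Rightarrow> poly \<Rightarrow> bool" where
  "veq p q \<longleftrightarrow> (\<lambda>v. ev p v - ev q v) \<in> relspan"

text \<open>The bracket [gamma,delta]_V for gamma of degree r and delta of degree s,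
  computed on representatives.\<close>
definition vbr :: "nat \<Rightarrow> nat \<Rightarrow> poly \<Rightarrow> poly \<Rightarrow> poly" where
  "vbr r s g d = concat (map (\<lambda>a.
      pmul (Dp (star a) g) (Dp a d) @
      psmul (- ((-1) ^ ((r - 1) * (s - 1)))) (pmul (Dp (star a) d) (Dp a g))) [X, Y])"

definition gamma :: poly where
  "gamma = [(1, [Y, X, Y, Ys])]"

definition Pi0 :: poly where
  "Pi0 = comm [(1, [X, Xs])] [(1, [Xs])] @ comm [(1, [Y, Xs])] [(1, [Ys])]"

definition Piinf :: poly where
  "Piinf = comm [(1, [Y, Ys])] [(1, [Y, X, Xs]), (1, [Y, Y, Ys])]"

end

theory Submission
  imports Defs
begin

text \<open>Both identities are finite computations in the free algebra: after expanding the
  derivatives, the difference of the two sides is an explicit linear combination of the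
  relations \<open>u w - (-1)^(|u| |w|) w u\<close>, with |u| the number of starred letters of u,
  and therefore vanishes in \<open>\<V>Q\<close>.\<close>

definition graded_comms :: "(complex \<times> word \<times> word) list \<Rightarrow> poly" where
  "graded_comms R =
     concat (map (\<lambda>(c, u, w). [(c, u @ w), (- (c * (-1) ^ (nst u * nst w)), w @ u)]) R)"

lemma ev_Nil [simp]: "ev [] v = 0"
  by (simp add: ev_def)

lemma ev_Cons [simp]: "ev ((c, u) # p) v = (if u = v then c else 0) + ev p v"
  by (simp add: ev_def)

lemma ev_append [simp]: "ev (p @ q) v = ev p v + ev q v"
  by (simp add: ev_def)

lemma ev_eq_0_if_notin: "v \<notin> snd ` set p \<Longrightarrow> ev p v = 0"
  by (induction p) auto

lemma ev_graded_comms_in_relspan: "ev (graded_comms R) \<in> relspan"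
proof (induction R)
  case Nil
  then show ?case
    using relspan.zero by (simp add: graded_comms_def ev_def)
next
  case (Cons r R)
  obtain c u w where r: "r = (c, u, w)"
    by (cases r) auto
  have "ev (graded_comms (r # R)) =
      (\<lambda>v. ev (graded_comms R) v + c * (mon (u @ w) v - (-1) ^ (nst u * nst w) * mon (w @ u) v))"
    by (auto simp: r graded_comms_def mon_def algebra_simps)
  then show ?case
    using relspan.step[OF Cons.IH] by simp
qed

lemma veq_by_graded_comms:
  assumes "\<forall>v \<in> snd ` set (p @ q @ graded_comms R). ev p v - ev q v = ev (graded_comms R) v"
  shows "veq p q"
proof -
  have "(\<lambda>v. ev p v - ev q v) = ev (graded_comms R)"
  proof
    fix v
    show "ev p v - ev q v = ev (graded_comms R) v"
    proof (cases "v \<in> snd ` set (p @ q @ graded_comms R)")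
      case True
      then show ?thesis using assms by blast
    next
      case False
      then show ?thesis by (simp add: ev_eq_0_if_notin image_Un)
    qed
  qed
  then show ?thesis
    using ev_graded_comms_in_relspan by (simp add: veq_def)
qed

lemmas bracket_simps =
  vbr_def Dp_def Dw_def pmul_def psmul_def comm_def nst_def upt_conv_Cons
  gamma_def Pi0_def Piinf_def

lemma bracket_gamma_Pi0: "veq (vbr 1 2 gamma Pi0) Piinf"
  by (rule veq_by_graded_comms[where R =
      "[(2, [Xs], [X, Y, Ys, Y]), (2, [Ys], [Y, Y, Ys, Y]), (2, [Y], [X, Y, Xs, Ys]),
        (-2, [Y, Xs], [X, Y, Ys]), (-2, [Y, Xs, Ys, Y], [X]), (-1, [Y, Ys, Y], [X, Xs]),
        (-1, [Y, Ys], [Y, Y, Ys]), (1, [Y], [X, Xs, Y, Ys])]"])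
    (simp add: bracket_simps graded_comms_def)

lemma bracket_gamma_Piinf: "veq (vbr 1 2 gamma Piinf) []"
  by (rule veq_by_graded_comms[where R =
      "[(-2, [Y, Ys, Y], [X, Y, Ys, Y]), (2, [Y, X, Y, Ys, Y], [X, Xs]),
        (-2, [Y, X, Y], [X, Xs, Y, Ys]), (2, [Y], [X, Y, Ys, Y, Y, Ys]),
        (-2, [Y], [X, Y, Y, Ys, Y, Ys]), (-2, [Y], [X, Y, Ys, Y, Ys, Y]),
        (2, [Y], [X, Xs, Y, X, Y, Ys]), (2, [Y], [X, Xs, Y, Ys, Y, X]),
        (2, [Y, Y, Ys, Y], [X, Y, Ys]), (2, [Y, Y, Ys, Y, Ys, Y], [X]),
        (-2, [Y, Ys, Y, Y], [X, Y, Ys]), (-2, [Y, Ys, Y, Y, Ys, Y], [X])]"])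
    (simp add: bracket_simps graded_comms_def)

theorem mainTheorem9:
  shows "veq (vbr 1 2 gamma Pi0) Piinf \<and> veq (vbr 1 2 gamma Piinf) []"
  using bracket_gamma_Pi0 bracket_gamma_Piinf by simp

end
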